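(* Let $p$ be an odd prime and let $f:\mathbb{F}_{p^{2k}}\to\mathbb{F}_p$ satisfy Condition A with sign $\epsilon$. Let $D=\{x\in\mathbb{F}_{p^{2k}}^*: f(x)=0\}$. Then $D$ is a $(v,d,\lambda_1,\lambda_2)$ partial difference set in the additive group of $\mathbb{F}_{p^{2k}}$, where $v=p^{2k}$, $d=(p^k-\epsilon)(p^{k-1}+\epsilon)$, $\lambda_1=(p^{k-1}+\epsilon)^2-3\epsilon(p^{k-1}+\epsilon)+\epsilon p^k$, $\lambda_2=(p^{k-1}+\epsilon)p^{k-1}$. Consequently the Cayley graph on $\mathbb{F}_{p^{2k}}$ in which $x,y$ are adjacent iff $x-y\in D$ is a strongly regular graph with these parameters.
   Context: Let $\zeta_p$ be a primitive complex $p$-th root of unity and $\mathrm{tr}$ the absolute trace from $\mathbb{F}_{p^{2k}}$ to $\mathbb{F}_p$. For $f:\mathbb{F}_{p^{2k}}\to\mathbb{F}_p$ the Walsh transform is $\mathcal{W}_f(b)=\sum_{x\in\mathbb{F}_{p^{2k}}}\zeta_p^{f(x)+\mathrm{tr}(bx)}$. Condition A: $p$ is an odd prime and $f:\mathbb{F}_{p^{2k}}\to\mathbb{F}_p$ satisfies $f(0)=0$, $f(-x)=f(x)$ for all $x$; there is an integer $l$ with $\gcd(l-1,p-1)=1$ such that $f(\alpha x)=\alpha^l f(x)$ for all $\alpha\in\mathbb{F}_p$, $x\in\mathbb{F}_{p^{2k}}$; and there exist a constant $\epsilon\in\{1,-1\}$ and a function $f^*:\mathbb{F}_{p^{2k}}\to\mathbb{F}_p$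 such that $\mathcal{W}_f(b)=\epsilon p^k\zeta_p^{f^*(b)}$ for all $b\in\mathbb{F}_{p^{2k}}$. A $d$-subset $D$ of a finite abelian group $G$ (written additively, of order $v$) with $0\notin D$ is a $(v,d,\lambda,\mu)$ partial difference set (PDS) if every nonzero element of $D$ can be written as $g-h$ with $g,h\in D$ in exactly $\lambda$ ways, and every nonzero element of $G\setminus D$ can be written so in exactly $\mu$ ways. *)

theory Defs
  imports Complex_Main "HOL-Computational_Algebra.Primes"
begin

definition prime_subfield :: "nat \<Rightarrow> 'a::field set" where
  "prime_subfield p = {of_nat i | i. i < p}"

text \<open>Index in {0..p-1} of an element of the prime subfield (exponent of zeta_p).\<close>
definition fp_idx :: "nat \<Rightarrow> 'a::field \<Rightarrow> nat" where
  "fp_idx p y = (THE i. i < p \<and> of_nat i = y)"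

definition abs_trace :: "nat \<Rightarrow> nat \<Rightarrow> 'a::field \<Rightarrow> 'a" where
  "abs_trace p n x = (\<Sum>i<n. x ^ (p ^ i))"

definition walsh :: "nat \<Rightarrow> nat \<Rightarrow> complex \<Rightarrow> ('a::{field,finite} \<Rightarrow> 'a) \<Rightarrow> 'a \<Rightarrow> complex" where
  "walsh p n zeta f b = (\<Sum>x\<in>UNIV. zeta ^ fp_idx p (f x + abs_trace p n (b * x)))"

definition diff_count :: "'a::ab_group_add set \<Rightarrow> 'a \<Rightarrow> nat" where
  "diff_count D x = card {(g, h). g \<in> D \<and> h \<in> D \<and> g - h = x}"

definition is_pds :: "'a::{ab_group_add,finite} set \<Rightarrow> int \<Rightarrow> int \<Rightarrow> int \<Rightarrow> int \<Rightarrow> bool" where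
  "is_pds D v d lam mu \<longleftrightarrow>
     0 \<notin> D \<and> int (card (UNIV::'a set)) = v \<and> int (card D) = d \<and>
     (\<forall>x\<in>D. int (diff_count D x) = lam) \<and>
     (\<forall>x. x \<noteq> 0 \<and> x \<notin> D \<longrightarrow> int (diff_count D x) = mu)"

definition is_srg :: "('a::finite \<Rightarrow> 'a \<Rightarrow> bool) \<Rightarrow> int \<Rightarrow> int \<Rightarrow> int \<Rightarrow> int \<Rightarrow> bool" where
  "is_srg E v d lam mu \<longleftrightarrow>
     (\<forall>x y. E x y \<longleftrightarrow> E y x) \<and> (\<forall>x. \<not> E x x) \<and>
     int (card (UNIV::'a set)) = v \<and>
     (\<forall>x. int (card {y. E x y}) = d) \<and>
     (\<forall>x y. E x y \<longrightarrow> int (card {z. E x z \<and> E y z}) = lam) \<and>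
     (\<forall>x y. x \<noteq> y \<and> \<not> E x y \<longrightarrow> int (card {z. E x z \<and> E y z}) = mu)"

end

theory Submission
  imports Defs "Berlekamp_Zassenhaus.Factor_Bound" "HOL-Number_Theory.Cong"
begin

text \<open>
  Let \<open>f\<close> satisfy Condition A on a field \<open>F\<close> with \<open>p\<^sup>2\<^sup>k\<close> elements, let \<open>Z = f\<^sup>-\<^sup>1(0)\<close> and
  \<open>D = Z - {0}\<close>.  The proof is Fourier analysis on the additive group of \<open>F\<close> with respect to
  the canonical character \<open>\<chi>(x) = \<zeta>\<^bsup>tr x\<^esup>\<close>; write \<open>\<^bold>Z(b) = \<Sum>\<^sub>x\<^sub>\<in>\<^sub>Z \<chi>(bx)\<close>.

  (1) The cyclotomic polynomial \<open>\<Phi>\<^sub>p\<close> is irreducible over \<open>\<rat>\<close> (Eisenstein), so every integer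
      relation among \<open>1, \<zeta>, \<dots>, \<zeta>\<^sup>p\<^sup>-\<^sup>1\<close> has constant coefficients.  With bentness this fixes how
      often \<open>f(x) + tr(bx)\<close> takes each value of \<open>\<bbbF>\<^sub>p\<close>, hence every twisted exponential sum.
  (2) Writing the indicator of \<open>f(x) = 0\<close> as \<open>p\<^sup>-\<^sup>1 \<Sum>\<^sub>t \<zeta>\<^bsup>t f(x)\<^esup>\<close> and using homogeneity (the map
      \<open>u \<mapsto> u\<^sup>1\<^sup>-\<^sup>l\<close> permutes \<open>\<bbbF>\<^sub>p\<^sup>*\<close> since \<open>gcd(l - 1, p - 1) = 1\<close>) gives
      \<open>p \<^bold>Z(b) = p\<^sup>2\<^sup>k [b = 0] + \<epsilon> p\<^sup>k (p [f\<^sup>*(b) = 0] - 1)\<close>, so \<open>\<^bold>Z\<close> is two-valued away from \<open>0\<close>.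
  (3) For a symmetric set with two-valued transform, Fourier inversion of the resulting
      quadratic relation counts \<open>|Z \<inter> (Z - a)|\<close> for all \<open>a\<close>; at \<open>a = 0\<close> this forces
      \<open>f\<^sup>*(0) = 0\<close>, which determines \<open>|Z|\<close>.
  (4) Removing \<open>0\<close> from \<open>Z\<close> yields the parameters of the partial difference set \<open>D\<close>, and a
      symmetric partial difference set is the connection set of a strongly regular Cayley graph.
\<close>

section \<open>Integer relations between powers of a primitive \<open>p\<close>-th root of unity\<close>

text \<open>The polynomial \<open>1 + X + \<dots> + X\<^sup>n\<^sup>-\<^sup>1\<close>; for prime \<open>n\<close> it is the \<open>n\<close>-th cyclotomic
  polynomial.\<close>

definition geom_poly :: "nat \<Rightarrow> 'a::comm_ring_1 poly" where
  "geom_poly n = (\<Sum>i<n. monom 1 i)"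

lemma coeff_geom_poly: "coeff (geom_poly n) i = (if i < n then 1 else 0)"
  unfolding geom_poly_def by (simp add: coeff_sum coeff_monom)

lemma degree_geom_poly: "n > 0 \<Longrightarrow> degree (geom_poly n :: 'a::comm_ring_1 poly) = n - 1"
  by (intro antisym degree_le le_degree) (auto simp: coeff_geom_poly)

lemma poly_geom_poly: "poly (geom_poly n) x = (\<Sum>i<n. x ^ i)"
  by (simp add: geom_poly_def poly_sum poly_monom)

lemma map_poly_geom_poly:
  assumes "h 0 = 0" "h 1 = 1"
  shows "map_poly h (geom_poly n) = geom_poly n"
  by (rule poly_eqI) (simp add: coeff_map_poly coeff_geom_poly assms)

text \<open>Shifting the variable, \<open>geom_poly n (X + 1) = \<Sum>i<n. (n choose (i+1)) X\<^sup>i\<close>, since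
  \<open>X \<cdot> geom_poly n (X + 1) = (X + 1)\<^sup>n - 1\<close>.  This is the form to which Eisenstein's criterion
  applies.\<close>

lemma coeff_geom_poly_shift:
  "coeff (pcompose (geom_poly n) [:1, 1:] :: int poly) i = int (n choose Suc i)"
proof -
  let ?P = "pcompose (geom_poly n) [:1, 1:] :: int poly"
  have "poly (?P * [:0, 1:]) = poly ([:1, 1:] ^ n - 1)"
  proof
    fix x :: int
    have "poly (?P * [:0, 1:]) x = ((1 + x) - 1) * (\<Sum>i<n. (1 + x) ^ i)"
      by (simp add: poly_pcompose poly_geom_poly mult.commute)
    also have "\<dots> = (1 + x) ^ n - 1" by (rule power_diff_1_eq[symmetric])
    finally show "poly (?P * [:0, 1:]) x = poly ([:1, 1:] ^ n - 1) x" by simp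
  qed
  hence shift: "?P * [:0, 1:] = [:1, 1:] ^ n - 1" by (simp only: poly_eq_poly_eq_iff)
  have "coeff ?P i = coeff ([:1, 1:] ^ n) (Suc i)"
    using arg_cong[OF shift, of "\<lambda>q. coeff q (Suc i)"] by simp
  also have "\<dots> = int (n choose Suc i)"
  proof (cases "Suc i \<le> n")
    case True thus ?thesis by (subst coeff_linear_poly_power) auto
  next
    case False
    hence "coeff ([:1::int, 1:] ^ n) (Suc i) = 0"
      using degree_linear_power[of "1::int" n] by (intro coeff_eq_0) simp
    thus ?thesis using False by simp
  qed
  finally show ?thesis .
qed

text \<open>The core is
  the one-sided statement: a factor \<open>A\<close> of proper degree whose constant term is divisible by
  \<open>p\<close> cannot exist, because the first coefficient of \<open>A\<close> not divisible by \<open>p\<close> would produce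
  a coefficient of the product not divisible by \<open>p\<close>.\<close>

lemma eisenstein_no_factor:
  fixes P A B :: "int poly" and p :: int
  assumes p: "prime p" and P: "P = A * B"
    and lead: "\<not> p dvd lead_coeff P"
    and middle: "\<And>i. i < degree P \<Longrightarrow> p dvd coeff P i"
    and const: "\<not> p\<^sup>2 dvd coeff P 0"
    and deg_A: "degree A < degree P" and A0: "p dvd coeff A 0"
  shows False
proof -
  have "P \<noteq> 0" using lead by auto
  hence nz: "A \<noteq> 0" "B \<noteq> 0" using P by auto
  have "lead_coeff P = lead_coeff A * lead_coeff B" using P by (simp add: lead_coeff_mult)
  hence lead_A: "\<not> p dvd lead_coeff A" using lead by auto
  have "coeff P 0 = coeff A 0 * coeff B 0" using P by (simp add: coeff_mult_0)
  hence B0: "\<not> p dvd coeff B 0" using const A0 by (auto simp: power2_eq_square mult_dvd_mono)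
  define r where "r = (LEAST i. \<not> p dvd coeff A i)"
  have r: "\<not> p dvd coeff A r" unfolding r_def by (rule LeastI[of _ "degree A"]) (rule lead_A)
  have "r \<le> degree A" unfolding r_def by (rule Least_le) (rule lead_A)
  hence "p dvd coeff P r" using deg_A by (intro middle) simp
  moreover have "coeff P r = (\<Sum>i<r. coeff A i * coeff B (r - i)) + coeff A r * coeff B 0"
    unfolding P coeff_mult by (simp add: lessThan_Suc_atMost[symmetric])
  moreover have "p dvd (\<Sum>i<r. coeff A i * coeff B (r - i))"
    by (intro dvd_sum dvd_mult2) (use not_less_Least in \<open>auto simp: r_def\<close>)
  ultimately have "p dvd coeff A r * coeff B 0" by (simp add: dvd_add_right_iff)
  thus False using p r B0 by (simp add: prime_dvd_mult_iff)
qed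

lemma eisenstein_irreducible:
  fixes P :: "int poly" and p :: int
  assumes p: "prime p" and deg: "degree P > 0"
    and lead: "\<not> p dvd lead_coeff P"
    and middle: "\<And>i. i < degree P \<Longrightarrow> p dvd coeff P i"
    and const: "\<not> p\<^sup>2 dvd coeff P 0"
  shows "irreducible\<^sub>d P"
proof (rule irreducible\<^sub>dI[OF deg])
  fix A B :: "int poly"
  assume "degree A < degree P" "degree B < degree P" and P: "P = A * B"
  moreover have "p dvd coeff A 0 * coeff B 0"
    using P middle[OF deg] by (simp add: coeff_mult_0)
  ultimately show False
    using eisenstein_no_factor[OF p _ lead middle const] p
    by (metis mult.commute prime_dvd_mult_iff)
qed

lemma irreducible_geom_poly:
  assumes p: "prime p"
  shows "irreducible\<^sub>d (geom_poly p :: int poly)"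
proof -
  have p2: "p \<ge> 2" using p by (rule prime_ge_2_nat)
  let ?shift = "\<lambda>q :: int poly. pcompose q [:1, 1:]"
  have deg: "degree (?shift (geom_poly p)) = p - 1"
    using p2 by (simp add: degree_pcompose degree_geom_poly)
  have "irreducible\<^sub>d (?shift (geom_poly p))"
  proof (rule eisenstein_irreducible[of "int p"])
    show "prime (int p)" using p by simp
    show "degree (?shift (geom_poly p)) > 0" using deg p2 by simp
    have "lead_coeff (?shift (geom_poly p)) = 1"
      unfolding deg coeff_geom_poly_shift using p2 by simp
    thus "\<not> int p dvd lead_coeff (?shift (geom_poly p))"
      using p2 by simp
    show "int p dvd coeff (?shift (geom_poly p)) i" if "i < degree (?shift (geom_poly p))" for i
    proof -
      have "p dvd (p choose Suc i)" using that deg p2 p by (intro dvd_choose_prime) auto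
      thus ?thesis unfolding coeff_geom_poly_shift by simp
    qed
    have "\<not> int p * int p dvd int p * 1"
      using p2 by (subst dvd_times_left_cancel_iff) auto
    thus "\<not> (int p)\<^sup>2 dvd coeff (?shift (geom_poly p)) 0"
      unfolding coeff_geom_poly_shift by (simp add: power2_eq_square)
  qed
  thus ?thesis
  proof (rule irreducible\<^sub>dE, intro irreducible\<^sub>dI)
    assume "degree (?shift (geom_poly p)) > 0"
    thus "degree (geom_poly p :: int poly) > 0" by (simp add: degree_pcompose)
  next
    fix q r :: "int poly"
    assume irr: "\<And>q r. degree q < degree (?shift (geom_poly p)) \<Longrightarrow>
                        degree r < degree (?shift (geom_poly p)) \<Longrightarrow> ?shift (geom_poly p) \<noteq> q * r"
      and dq: "degree q < degree (geom_poly p :: int poly)"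
      and dr: "degree r < degree (geom_poly p :: int poly)"
      and qr: "geom_poly p = q * r"
    have "?shift (geom_poly p) = ?shift q * ?shift r" unfolding qr by (rule pcompose_mult)
    moreover have "degree (?shift q) < degree (?shift (geom_poly p))"
      and "degree (?shift r) < degree (?shift (geom_poly p))"
      using dq dr by (simp_all add: degree_pcompose)
    ultimately show False using irr by blast
  qed
qed


interpretation of_rat_poly: map_poly_idom_hom "of_rat :: rat \<Rightarrow> complex" ..

context
  fixes p :: nat and zeta :: complex
  assumes p_prime: "prime p" and zeta_p: "zeta ^ p = 1" and zeta_ne_1: "zeta \<noteq> 1"
begin

lemma zeta_power_mod: "zeta ^ (m mod p) = zeta ^ m"
proof -
  have "zeta ^ m = (zeta ^ p) ^ (m div p) * zeta ^ (m mod p)"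
    by (metis mult_div_mod_eq power_add power_mult)
  thus ?thesis using zeta_p by simp
qed

lemma zeta_power_eq_1_iff: "zeta ^ m = 1 \<longleftrightarrow> p dvd m"
proof
  assume "p dvd m"
  thus "zeta ^ m = 1" using zeta_power_mod[of m] by simp
next
  assume zm: "zeta ^ m = 1"
  show "p dvd m"
  proof (rule ccontr)
    assume "\<not> p dvd m"
    hence "coprime p m" using p_prime by (simp add: prime_imp_coprime)
    hence "gcd m p = 1" by (simp add: gcd.commute coprime_iff_gcd_eq_1)
    moreover have "m \<noteq> 0" using \<open>\<not> p dvd m\<close> by (metis dvd_0_right)
    ultimately
    obtain x y where "m * x = p * y + 1" using bezout_nat[of m p] by auto
    hence "zeta = zeta ^ (m * x)" using zeta_p by (simp add: power_add power_mult)
    also have "\<dots> = 1" using zm by (simp add: power_mult)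
    finally show False using zeta_ne_1 by simp
  qed
qed

lemma sum_zeta_powers: "(\<Sum>i<p. zeta ^ i) = 0"
  using power_diff_1_eq[of zeta p] zeta_p zeta_ne_1 by simp

lemma sum_zeta_powers_mult: "(\<Sum>t<p. zeta ^ (t * m)) = (if p dvd m then of_nat p else 0)"
proof (cases "p dvd m")
  case True
  thus ?thesis using zeta_power_eq_1_iff[of "t * m" for t] by simp
next
  case False
  define w where "w = zeta ^ m"
  have "w \<noteq> 1" "w ^ p = 1"
    using False zeta_p by (simp_all add: w_def zeta_power_eq_1_iff flip: power_mult)
  hence "(\<Sum>t<p. w ^ t) = 0" using power_diff_1_eq[of w p] by simp
  moreover have "(\<Sum>t<p. zeta ^ (t * m)) = (\<Sum>t<p. w ^ t)"
    unfolding w_def by (intro sum.cong refl) (metis power_mult mult.commute)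
  ultimately show ?thesis using False by simp
qed

text \<open>Since \<open>\<zeta>\<close> is a root of the irreducible polynomial \<open>geom_poly p\<close> of degree \<open>p - 1\<close>,
  no nonzero rational polynomial of smaller degree vanishes at \<open>\<zeta>\<close>.\<close>

lemma rat_poly_vanishing_at_zeta:
  fixes P :: "rat poly"
  assumes deg: "degree P < p - 1" and root: "poly (map_poly of_rat P) zeta = 0"
  shows "P = 0"
proof (rule ccontr)
  assume "P \<noteq> 0"
  define Phi where "Phi = (geom_poly p :: rat poly)"
  have p2: "p \<ge> 2" using p_prime by (rule prime_ge_2_nat)
  have irr: "irreducible\<^sub>d Phi"
    using irreducible\<^sub>d_int_rat[OF irreducible_geom_poly[OF p_prime]]
    by (simp add: Phi_def map_poly_geom_poly)
  have deg_Phi: "degree Phi = p - 1" using p2 by (simp add: Phi_def degree_geom_poly)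
  have root_Phi: "poly (map_poly of_rat Phi) zeta = 0"
    by (simp add: Phi_def map_poly_geom_poly poly_geom_poly sum_zeta_powers)
  define g where "g = gcd P Phi"
  obtain h where Phi_gh: "Phi = g * h" unfolding g_def by (metis dvd_def gcd_dvd2)
  have "g \<noteq> 0" "h \<noteq> 0" using irr Phi_gh by auto
  have "degree g \<le> degree P" using \<open>P \<noteq> 0\<close> unfolding g_def by (simp add: dvd_imp_degree_le)
  hence "degree g < degree Phi" using deg deg_Phi by simp
  moreover have "degree h < degree Phi" if "degree g \<noteq> 0"
    using that Phi_gh \<open>g \<noteq> 0\<close> \<open>h \<noteq> 0\<close> by (simp add: degree_mult_eq)
  ultimately have "degree g = 0" using irreducible\<^sub>dD(2)[OF irr] Phi_gh by blast
  then obtain a where g: "g = [:a:]" "a \<noteq> 0" using \<open>g \<noteq> 0\<close> by (metis degree_eq_zeroE pCons_0_0)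
  obtain u v where "u * P + v * Phi = g"
    unfolding g_def using bezout_coefficients_fst_snd by blast
  hence "poly (map_poly of_rat g) zeta = 0"
    using root root_Phi by (metis of_rat_poly.hom_add of_rat_poly.hom_mult poly_add poly_mult
        mult_zero_right add_0)
  thus False using g by simp
qed

text \<open>Hence every integer relation \<open>\<Sum>i<p. c\<^sub>i \<zeta>\<^sup>i = 0\<close> has constant coefficients:
  subtracting \<open>c\<^sub>p\<^sub>-\<^sub>1 \<Sum>i<p. \<zeta>\<^sup>i = 0\<close> leaves a rational polynomial of degree \<open>< p - 1\<close>
  vanishing at \<open>\<zeta>\<close>.\<close>

lemma integer_relation_zeta_constant:
  fixes c :: "nat \<Rightarrow> int"
  assumes rel: "(\<Sum>i<p. of_int (c i) * zeta ^ i) = 0" and i: "i < p"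
  shows "c i = c 0"
proof -
  have p2: "p \<ge> 2" using p_prime by (rule prime_ge_2_nat)
  define P :: "rat poly" where "P = (\<Sum>j<p - 1. monom (of_int (c j - c (p - 1))) j)"
  have coeff_P: "coeff P j = (if j < p - 1 then of_int (c j - c (p - 1)) else 0)" for j
    unfolding P_def by (simp add: coeff_sum coeff_monom)
  have "map_poly of_rat P = (\<Sum>j<p - 1. monom (of_int (c j - c (p - 1)) :: complex) j)"
    by (rule poly_eqI) (simp add: coeff_map_poly coeff_P coeff_sum coeff_monom of_rat_of_int_eq of_rat_diff)
  hence "poly (map_poly of_rat P) zeta = (\<Sum>j<p - 1. of_int (c j - c (p - 1)) * zeta ^ j)"
    by (simp add: poly_sum poly_monom)
  also have "\<dots> = (\<Sum>j<p. of_int (c j - c (p - 1)) * zeta ^ j)"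
  proof -
    have "{..<p} = insert (p - 1) {..<p - 1}" using p2 by auto
    thus ?thesis by simp
  qed
  also have "\<dots> = (\<Sum>j<p. of_int (c j) * zeta ^ j) - of_int (c (p - 1)) * (\<Sum>j<p. zeta ^ j)"
    by (simp add: algebra_simps sum_subtractf sum_distrib_left sum_distrib_right)
  also have "\<dots> = 0" using rel sum_zeta_powers by simp
  finally have root: "poly (map_poly of_rat P) zeta = 0" .
  have "degree P \<le> p - 2" by (rule degree_le) (auto simp: coeff_P)
  hence "P = 0" using p2 root by (intro rat_poly_vanishing_at_zeta) auto
  hence const: "c j = c (p - 1)" if "j < p - 1" for j using coeff_P[of j] that by simp
  have "c i = c (p - 1)" using const[of i] i by (cases "i = p - 1") auto
  moreover have "c 0 = c (p - 1)" using const[of 0] p2 by simp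
  ultimately show ?thesis by simp
qed

end


lemma sum_by_values:
  fixes phi :: "'b \<Rightarrow> nat" and h :: "nat \<Rightarrow> 'c::comm_semiring_1"
  assumes "finite A" "\<And>x. x \<in> A \<Longrightarrow> phi x < m"
  shows "(\<Sum>x\<in>A. h (phi x)) = (\<Sum>i<m. of_nat (card {x\<in>A. phi x = i}) * h i)"
proof -
  have "(\<Sum>x\<in>A. h (phi x)) = (\<Sum>x\<in>A. \<Sum>i<m. if phi x = i then h i else 0)"
    using assms(2) by (intro sum.cong) (auto simp: sum.delta)
  also have "\<dots> = (\<Sum>i<m. \<Sum>x\<in>A. if phi x = i then h i else 0)" by (rule sum.swap)
  also have "\<dots> = (\<Sum>i<m. of_nat (card {x\<in>A. phi x = i}) * h i)"
    using assms(1) by (intro sum.cong refl) (simp add: sum.If_cases Int_def conj_commute)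
  finally show ?thesis .
qed

lemma diff_count_eq: "diff_count (D :: 'b::ab_group_add set) a = card {h\<in>D. h + a \<in> D}"
proof -
  have "bij_betw (\<lambda>h. (h + a, h)) {h\<in>D. h + a \<in> D} {(g, h). g \<in> D \<and> h \<in> D \<and> g - h = a}"
    by (rule bij_betw_byWitness[where f' = snd]) (auto simp: algebra_simps)
  thus ?thesis unfolding diff_count_def by (simp add: bij_betw_same_card)
qed

text \<open>The Cayley graph of a symmetric partial difference set is strongly regular with the same
  parameters: the common neighbours of \<open>x\<close> and \<open>y\<close> correspond to the representations of
  \<open>x - y\<close> as a difference of elements of \<open>D\<close>.\<close>

lemma pds_cayley_srg:
  fixes D :: "'b::{ab_group_add,finite} set"
  assumes pds: "is_pds D v d lam mu" and sym: "\<And>x. x \<in> D \<Longrightarrow> - x \<in> D"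
  shows "is_srg (\<lambda>x y. x - y \<in> D) v d lam mu"
proof -
  have neighbours: "card {y. x - y \<in> D} = card D" for x
  proof -
    have "bij_betw (\<lambda>y. x - y) {y. x - y \<in> D} D"
      by (rule bij_betw_byWitness[where f' = "\<lambda>d. x - d"]) auto
    thus ?thesis by (rule bij_betw_same_card)
  qed
  have common: "card {z. x - z \<in> D \<and> y - z \<in> D} = diff_count D (x - y)" for x y
  proof -
    have "bij_betw (\<lambda>z. y - z) {z. x - z \<in> D \<and> y - z \<in> D} {h\<in>D. h + (x - y) \<in> D}"
      by (rule bij_betw_byWitness[where f' = "\<lambda>h. y - h"]) (auto simp: algebra_simps)
    thus ?thesis by (simp add: bij_betw_same_card diff_count_eq)
  qed
  have "x - y \<in> D \<longleftrightarrow> y - x \<in> D" for x y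
    using sym[of "x - y"] sym[of "y - x"] by auto
  thus ?thesis using pds unfolding is_pds_def is_srg_def by (auto simp: neighbours common)
qed

text \<open>Removing \<open>0\<close> from a symmetric set \<open>Z \<ni> 0\<close> removes exactly the two solutions
  \<open>y = 0\<close> and \<open>y = -a\<close> of \<open>y, y + a \<in> Z\<close> (when \<open>a \<in> Z\<close>, \<open>a \<noteq> 0\<close>).\<close>

lemma shift_count_remove_zero:
  fixes Z :: "'b::ab_group_add set"
  assumes fin: "finite Z" and Z0: "0 \<in> Z" and sym: "\<And>x. x \<in> Z \<Longrightarrow> - x \<in> Z" and a: "a \<noteq> 0"
  shows "card {y\<in>Z. y + a \<in> Z} = card {h\<in>Z - {0}. h + a \<in> Z - {0}} + (if a \<in> Z then 2 else 0)"
proof -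
  define T where "T = (if a \<in> Z then {0, - a} else {})"
  have "- a \<in> Z \<longleftrightarrow> a \<in> Z" using sym[of a] sym[of "- a"] by auto
  hence split: "{y\<in>Z. y + a \<in> Z} = {h\<in>Z - {0}. h + a \<in> Z - {0}} \<union> T"
    using Z0 by (auto simp: T_def add_eq_0_iff2)
  have "{h\<in>Z - {0}. h + a \<in> Z - {0}} \<inter> T = {}" by (auto simp: T_def)
  moreover have "card T = (if a \<in> Z then 2 else 0)" using a by (simp add: T_def)
  ultimately show ?thesis unfolding split using fin by (simp add: card_Un_disjoint T_def)
qed

section \<open>Prime subfields and traces of finite fields\<close>

text \<open>Fermat's little theorem for a finite field: multiplication by \<open>x \<noteq> 0\<close> permutes the
  nonzero elements, so \<open>x\<^sup>q\<^sup>-\<^sup>1 = 1\<close>.\<close>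

lemma finite_field_power_card:
  fixes x :: "'a::{field,finite}"
  shows "x ^ card (UNIV :: 'a set) = x"
proof -
  have card_pos: "card (UNIV :: 'a set) > 0" by (rule finite_UNIV_card_ge_0) simp
  show ?thesis
  proof (cases "x = 0")
    case True
    thus ?thesis using card_pos by simp
  next
    case False
    let ?U = "UNIV - {0 :: 'a}"
    have "x ^ card ?U * (\<Prod>y\<in>?U. y) = (\<Prod>y\<in>?U. x) * (\<Prod>y\<in>?U. y)"
      by (simp only: prod_constant)
    also have "\<dots> = (\<Prod>y\<in>?U. x * y)" by (rule prod.distrib[symmetric])
    also have "\<dots> = (\<Prod>y\<in>?U. y)"
      by (rule prod.reindex_bij_witness[of _ "\<lambda>y. y / x" "\<lambda>y. x * y"]) (use False in auto)
    finally have "x ^ card ?U = 1" by simp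
    have "card (UNIV :: 'a set) = Suc (card ?U)" using card_pos by simp
    hence "x ^ card (UNIV :: 'a set) = x ^ card ?U * x" by (simp only: power_Suc2)
    thus ?thesis using \<open>x ^ card ?U = 1\<close> by simp
  qed
qed

context
  fixes p :: nat
  assumes p_prime: "prime p" and char_p: "of_nat p = (0 :: 'a::{field,finite})"
begin

abbreviation Fp :: "'a set" where "Fp \<equiv> prime_subfield p"

lemma p_ge_2: "p \<ge> 2"
  using p_prime by (rule prime_ge_2_nat)

lemma CHAR_eq: "CHAR('a) = p"
proof -
  have "CHAR('a) dvd p" using char_p by (simp add: of_nat_eq_0_iff_char_dvd)
  thus ?thesis using p_prime by (auto simp: prime_nat_iff)
qed

lemma of_nat_eq_iff_mod: "(of_nat a :: 'a) = of_nat b \<longleftrightarrow> a mod p = b mod p"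
  by (simp add: of_nat_eq_iff_cong_CHAR CHAR_eq cong_def)

lemma of_nat_eq_0_iff_dvd: "(of_nat a :: 'a) = 0 \<longleftrightarrow> p dvd a"
  by (simp add: of_nat_eq_0_iff_char_dvd CHAR_eq)

lemma of_nat_mod_p: "(of_nat (a mod p) :: 'a) = of_nat a"
  by (simp add: of_nat_eq_iff_mod)

lemma of_nat_ne_0: "0 < u \<Longrightarrow> u < p \<Longrightarrow> (of_nat u :: 'a) \<noteq> 0"
  by (auto simp: of_nat_eq_0_iff_dvd dest: dvd_imp_le)

lemma mem_Fp_iff: "y \<in> Fp \<longleftrightarrow> (\<exists>m. y = of_nat m)"
proof
  assume "\<exists>m. y = of_nat m"
  then obtain m where "y = of_nat m" by blast
  hence "y = of_nat (m mod p)" "m mod p < p" using p_ge_2 by (simp_all add: of_nat_mod_p)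
  thus "y \<in> Fp" unfolding prime_subfield_def by blast
qed (auto simp: prime_subfield_def)

lemma of_nat_in_Fp [simp]: "(of_nat m :: 'a) \<in> Fp"
  by (auto simp: mem_Fp_iff)

lemma Fp_add: "a \<in> Fp \<Longrightarrow> b \<in> Fp \<Longrightarrow> a + b \<in> Fp"
  unfolding mem_Fp_iff by (auto simp flip: of_nat_add)

lemma Fp_mult: "a \<in> Fp \<Longrightarrow> b \<in> Fp \<Longrightarrow> a * b \<in> Fp"
  unfolding mem_Fp_iff by (auto simp flip: of_nat_mult)

lemma fp_idx_of_nat: "fp_idx p (of_nat m :: 'a) = m mod p"
  unfolding fp_idx_def
proof (rule the_equality)
  show "m mod p < p \<and> (of_nat (m mod p) :: 'a) = of_nat m" using p_ge_2 by (simp add: of_nat_mod_p)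
  fix i assume "i < p \<and> (of_nat i :: 'a) = of_nat m"
  thus "i = m mod p" by (metis of_nat_eq_iff_mod mod_less)
qed

lemma fp_idx_less: "y \<in> Fp \<Longrightarrow> fp_idx p y < p"
proof -
  assume "y \<in> Fp"
  then obtain m where "y = of_nat m" unfolding mem_Fp_iff by blast
  thus ?thesis using p_ge_2 by (simp add: fp_idx_of_nat)
qed

lemma of_nat_fp_idx: "y \<in> Fp \<Longrightarrow> (of_nat (fp_idx p y) :: 'a) = y"
proof -
  assume "y \<in> Fp"
  then obtain m where "y = of_nat m" unfolding mem_Fp_iff by blast
  thus ?thesis by (simp add: fp_idx_of_nat of_nat_mod_p)
qed

lemma fp_idx_eq_0_iff: "y \<in> Fp \<Longrightarrow> fp_idx p y = 0 \<longleftrightarrow> y = 0"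
proof
  assume "y \<in> Fp" "fp_idx p y = 0"
  thus "y = 0" using of_nat_fp_idx[of y] by simp
qed (simp add: fp_idx_of_nat[of 0, simplified])

lemma frobenius_add: "(x + y :: 'a) ^ (p ^ i) = x ^ (p ^ i) + y ^ (p ^ i)"
  by (rule freshmans_dream') (simp_all add: CHAR_eq p_prime)

lemma frobenius_sum: "(sum g A :: 'a) ^ (p ^ i) = (\<Sum>j\<in>A. g j ^ (p ^ i))"
  by (rule freshmans_dream_sum') (simp_all add: CHAR_eq p_prime)

lemma Fp_power_p: "y \<in> Fp \<Longrightarrow> y ^ p = y"
proof -
  have "(of_nat m :: 'a) ^ p = of_nat m" for m
  proof (induction m)
    case (Suc m)
    have "(of_nat (Suc m) :: 'a) ^ (p ^ 1) = of_nat m ^ (p ^ 1) + 1 ^ (p ^ 1)"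
      by (simp only: of_nat_Suc frobenius_add add.commute)
    thus ?case using Suc by simp
  qed (use p_ge_2 in simp)
  thus "y \<in> Fp \<Longrightarrow> y ^ p = y" by (auto simp: mem_Fp_iff)
qed

lemma Fp_power_p_power: "y \<in> Fp \<Longrightarrow> y ^ (p ^ i) = y"
  by (induction i) (simp_all add: power_mult Fp_power_p mult.commute)

lemma card_Fp: "card Fp = p"
proof -
  have "Fp = (of_nat :: nat \<Rightarrow> 'a) ` {..<p}" unfolding prime_subfield_def by auto
  moreover have "inj_on (of_nat :: nat \<Rightarrow> 'a) {..<p}" by (auto simp: inj_on_def of_nat_eq_iff_mod)
  ultimately show ?thesis by (simp add: card_image)
qed

text \<open>The polynomial \<open>X\<^sup>p - X\<close> has at most \<open>p\<close> roots, all of \<open>Fp\<close> are roots, and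
  \<open>|Fp| = p\<close>.\<close>

lemma Fp_eq_fixed_points: "Fp = {y. y ^ p = y}"
proof -
  define P :: "'a poly" where "P = monom 1 p - [:0, 1:]"
  have "coeff P p = 1" using p_ge_2 by (auto simp: P_def coeff_monom coeff_pCons split: nat.splits)
  hence "P \<noteq> 0" by auto
  have "degree P \<le> p" unfolding P_def using p_ge_2 by (intro degree_diff_le) (auto simp: degree_monom_le)
  moreover have roots: "{y. y ^ p = y} = {y. poly P y = 0}" by (simp add: P_def poly_monom)
  ultimately have "card {y::'a. y ^ p = y} \<le> p" using card_poly_roots_bound[OF \<open>P \<noteq> 0\<close>] by simp
  moreover have sub: "Fp \<subseteq> {y. y ^ p = y}" using Fp_power_p by auto
  ultimately have "card Fp = card {y::'a. y ^ p = y}" using card_Fp card_mono[OF _ sub] by simp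
  thus ?thesis using card_subset_eq[OF _ sub] by simp
qed

lemma Fp_inverse: "a \<in> Fp \<Longrightarrow> inverse a \<in> Fp"
  by (simp add: Fp_eq_fixed_points power_inverse)

lemma Fp_power_int: "a \<in> Fp \<Longrightarrow> power_int a m \<in> Fp"
proof -
  assume "a \<in> Fp"
  hence "a ^ p = a" by (simp add: Fp_eq_fixed_points)
  have "power_int a m ^ p = power_int (a ^ p) m"
    by (simp only: power_int_power power_int_power' mult.commute)
  thus ?thesis unfolding Fp_eq_fixed_points \<open>a ^ p = a\<close> by simp
qed


text \<open>If \<open>gcd(l - 1, p - 1) = 1\<close>, then \<open>y \<mapsto> y\<^sup>1\<^sup>-\<^sup>l\<close> is injective on the nonzero elements of
  \<open>Fp\<close>: the quotient \<open>d\<close> of two elements with the same image satisfies \<open>d\<^sup>1\<^sup>-\<^sup>l = 1 = d\<^sup>p\<^sup>-\<^sup>1\<close>,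
  hence \<open>d = 1\<close> by B\'ezout.\<close>

lemma power_int_inj_Fp:
  assumes l: "gcd (l - 1) (int p - 1) = 1"
    and g1: "g1 \<in> Fp" "g1 \<noteq> 0" and g2: "g2 \<in> Fp" "g2 \<noteq> 0"
    and eq: "power_int g1 (1 - l) = power_int g2 (1 - l)"
  shows "g1 = g2"
proof -
  define d where "d = g1 / g2"
  have d_Fp: "d \<in> Fp" unfolding d_def divide_inverse using g1 g2 by (intro Fp_mult Fp_inverse)
  have d0: "d \<noteq> 0" unfolding d_def using g1 g2 by simp
  have d1: "power_int d (1 - l) = 1"
    unfolding d_def power_int_divide_distrib eq using g2(2) by simp
  have "d ^ (p - 1) * d = d ^ p" using p_ge_2 by (simp flip: power_Suc2)
  hence "d ^ (p - 1) = 1" using Fp_power_p[OF d_Fp] d0 by simp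
  hence d2: "power_int d (int p - 1) = 1" using p_ge_2 by (simp add: of_nat_diff flip: power_int_of_nat)
  have "gcd (1 - l) (int p - 1) = 1" using l gcd_neg1_int[of "l - 1" "int p - 1"] by simp
  then obtain u v where uv: "u * (1 - l) + v * (int p - 1) = 1"
    using bezout_int[of "1 - l" "int p - 1"] by auto
  have "d = power_int d ((1 - l) * u + (int p - 1) * v)" using uv by (simp add: algebra_simps)
  also have "\<dots> = power_int (power_int d (1 - l)) u * power_int (power_int d (int p - 1)) v"
    using d0 by (simp add: power_int_add power_int_mult)
  also have "\<dots> = 1" by (simp add: d1 d2)
  finally show ?thesis unfolding d_def using g2 by simp
qed

lemma power_int_reparam_bij:
  assumes l: "gcd (l - 1) (int p - 1) = 1"
  shows "bij_betw (\<lambda>u. fp_idx p (power_int (of_nat u :: 'a) (1 - l))) {1..<p} {1..<p}"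
proof -
  let ?s = "\<lambda>u. fp_idx p (power_int (of_nat u :: 'a) (1 - l))"
  have into: "?s ` {1..<p} \<subseteq> {1..<p}"
  proof
    fix t assume "t \<in> ?s ` {1..<p}"
    then obtain u where u: "u \<in> {1..<p}" "t = ?s u" by blast
    have nz: "power_int (of_nat u :: 'a) (1 - l) \<noteq> 0" using u(1) of_nat_ne_0[of u] by simp
    have Fp: "power_int (of_nat u :: 'a) (1 - l) \<in> Fp" by (rule Fp_power_int) simp
    show "t \<in> {1..<p}"
      using u(2) fp_idx_less[OF Fp] fp_idx_eq_0_iff[OF Fp] nz by auto
  qed
  have "inj_on ?s {1..<p}"
  proof (rule inj_onI)
    fix u v assume u: "u \<in> {1..<p}" and v: "v \<in> {1..<p}" and e: "?s u = ?s v"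
    have eq: "power_int (of_nat u :: 'a) (1 - l) = power_int (of_nat v) (1 - l)"
      using arg_cong[OF e, of "of_nat :: nat \<Rightarrow> 'a"] by (simp add: of_nat_fp_idx Fp_power_int)
    have "(of_nat u :: 'a) \<noteq> 0" "(of_nat v :: 'a) \<noteq> 0"
      using u v of_nat_ne_0[of u] of_nat_ne_0[of v] by auto
    hence "(of_nat u :: 'a) = of_nat v"
      using power_int_inj_Fp[OF l of_nat_in_Fp _ of_nat_in_Fp _ eq] by blast
    thus "u = v" using u v by (simp add: of_nat_eq_iff_mod)
  qed
  thus ?thesis unfolding bij_betw_def using endo_inj_surj[OF _ into] by simp
qed

context
  fixes n :: nat and zeta :: complex
  assumes card_F: "card (UNIV :: 'a set) = p ^ n"
    and zeta_p: "zeta ^ p = 1" and zeta_ne_1: "zeta \<noteq> 1"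
begin

abbreviation tr :: "'a \<Rightarrow> 'a" where "tr \<equiv> abs_trace p n"

lemma n_pos: "n > 0"
proof (rule ccontr)
  assume "\<not> n > 0"
  hence "card (UNIV :: 'a set) = 1" using card_F by simp
  moreover have "card {0 :: 'a, 1} \<le> card (UNIV :: 'a set)" by (rule card_mono) auto
  ultimately show False by simp
qed

lemma power_card_F: "(x :: 'a) ^ (p ^ n) = x"
  using finite_field_power_card[of x] by (simp add: card_F)

lemma trace_add: "tr (x + y) = tr x + tr y"
  by (simp add: abs_trace_def frobenius_add sum.distrib)

lemma trace_0: "tr 0 = 0"
  using p_ge_2 by (simp add: abs_trace_def power_0_left)

text \<open>\<open>tr x\<^sup>p = tr x\<close>: raising to the \<open>p\<close>-th power shifts the conjugates \<open>x\<^sup>p\<^sup>i\<close> cyclically,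
  because \<open>x\<^sup>p\<^sup>n = x\<close>.\<close>

lemma trace_in_Fp: "tr x \<in> Fp"
proof -
  define g where "g i = x ^ (p ^ i)" for i
  have "tr x ^ (p ^ 1) = (\<Sum>i<n. g (Suc i))"
    unfolding abs_trace_def frobenius_sum
    by (intro sum.cong refl) (simp add: g_def power_mult[symmetric] mult.commute)
  also have "\<dots> = (\<Sum>i<n. g i) + g n - g 0"
    using sum.lessThan_Suc_shift[of g n] sum.lessThan_Suc[of g n] by (simp add: algebra_simps)
  also have "g n = g 0" using power_card_F[of x] by (simp add: g_def)
  finally have "tr x ^ p = tr x" by (simp add: g_def abs_trace_def)
  thus ?thesis by (simp add: Fp_eq_fixed_points)
qed

lemma trace_scalar: "c \<in> Fp \<Longrightarrow> tr (c * x) = c * tr x"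
  by (simp add: abs_trace_def power_mult_distrib Fp_power_p_power sum_distrib_left)

text \<open>The trace is not identically zero: it is a polynomial function of degree \<open>p\<^sup>n\<^sup>-\<^sup>1\<close>,
  which cannot vanish at all \<open>p\<^sup>n\<close> points.\<close>

lemma trace_nonzero: "\<exists>x. tr x \<noteq> 0"
proof (rule ccontr)
  assume "\<not> (\<exists>x. tr x \<noteq> 0)"
  hence all0: "tr x = 0" for x by blast
  define m where "m = n - 1"
  have n_eq: "n = Suc m" using n_pos by (simp add: m_def)
  define T :: "'a poly" where "T = (\<Sum>i<n. monom 1 (p ^ i))"
  have coeff_T: "coeff T j = (\<Sum>i<n. if p ^ i = j then 1 else 0)" for j
    by (simp add: T_def coeff_sum coeff_monom)
  have "coeff T (p ^ m) = (\<Sum>i<n. if i = m then 1 else 0)"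
    unfolding coeff_T using p_ge_2 by (intro sum.cong refl) (simp add: power_inject_exp)
  hence "T \<noteq> 0" using n_eq by auto
  have "degree T \<le> p ^ m"
  proof (rule degree_le, intro allI impI)
    fix j assume j: "p ^ m < j"
    have "p ^ i \<noteq> j" if "i < n" for i
    proof -
      have "p ^ i \<le> p ^ m" using that n_eq p_ge_2 by (intro power_increasing) auto
      thus ?thesis using j by simp
    qed
    thus "coeff T j = 0" unfolding coeff_T by (intro sum.neutral) auto
  qed
  moreover have "{x. poly T x = 0} = UNIV"
    using all0 by (simp add: T_def abs_trace_def poly_sum poly_monom)
  hence "card (UNIV :: 'a set) \<le> degree T" using card_poly_roots_bound[OF \<open>T \<noteq> 0\<close>] by simp
  moreover have "p ^ m < p ^ n" using n_eq p_ge_2 by simp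
  ultimately show False using card_F by simp
qed

subsection \<open>Additive characters and Fourier analysis\<close>

definition psi :: "'a \<Rightarrow> complex" where "psi y = zeta ^ fp_idx p y"
definition chi :: "'a \<Rightarrow> complex" where "chi x = psi (tr x)"

lemma psi_of_nat: "psi (of_nat m) = zeta ^ m"
  by (simp add: psi_def fp_idx_of_nat zeta_power_mod[OF p_prime zeta_p zeta_ne_1])

lemma psi_add: "a \<in> Fp \<Longrightarrow> b \<in> Fp \<Longrightarrow> psi (a + b) = psi a * psi b"
  by (auto simp: mem_Fp_iff psi_of_nat power_add simp flip: of_nat_add)

lemma psi_scaled: "y \<in> Fp \<Longrightarrow> psi (of_nat u * y) = zeta ^ (u * fp_idx p y)"
  by (metis of_nat_fp_idx of_nat_mult psi_of_nat)

lemma sum_psi_scaled: "y \<in> Fp \<Longrightarrow> (\<Sum>t<p. psi (of_nat t * y)) = (if y = 0 then of_nat p else 0)"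
proof -
  assume y: "y \<in> Fp"
  have "p dvd fp_idx p y \<longleftrightarrow> y = 0"
    using fp_idx_less[OF y] fp_idx_eq_0_iff[OF y] by (auto dest: dvd_imp_le)
  thus ?thesis
    using sum_zeta_powers_mult[OF p_prime zeta_p zeta_ne_1, of "fp_idx p y"]
    by (simp add: psi_scaled[OF y])
qed

lemma chi_add: "chi (x + y) = chi x * chi y"
  by (simp add: chi_def trace_add psi_add trace_in_Fp)

lemma chi_0: "chi 0 = 1"
  using psi_of_nat[of 0] by (simp add: chi_def trace_0)

text \<open>For \<open>b = 1\<close> this follows by
  translating with an element \<open>x\<^sub>0\<close> with \<open>\<chi>(x\<^sub>0) \<noteq> 1\<close>, which exists as the trace is onto.\<close>

lemma sum_chi: "(\<Sum>x\<in>UNIV. chi x) = 0"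
proof -
  obtain x0 where x0: "tr x0 \<noteq> 0" using trace_nonzero by blast
  hence "0 < fp_idx p (tr x0)" "fp_idx p (tr x0) < p"
    using fp_idx_less[OF trace_in_Fp] fp_idx_eq_0_iff[OF trace_in_Fp] by auto
  hence "\<not> p dvd fp_idx p (tr x0)" by (meson dvd_imp_le not_le)
  hence chi_x0: "chi x0 \<noteq> 1"
    by (simp add: chi_def psi_def zeta_power_eq_1_iff[OF p_prime zeta_p zeta_ne_1])
  have "(\<Sum>x\<in>UNIV. chi x) = (\<Sum>x\<in>UNIV. chi (x + x0))"
    by (rule sum.reindex_bij_witness[of _ "\<lambda>x. x + x0" "\<lambda>x. x - x0"]) auto
  also have "\<dots> = chi x0 * (\<Sum>x\<in>UNIV. chi x)" by (simp add: chi_add sum_distrib_left mult.commute)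
  finally show ?thesis using chi_x0 by (metis mult_cancel_right1 mult.commute)
qed

lemma sum_chi_mult: "(\<Sum>x\<in>UNIV. chi (b * x)) = (if b = 0 then of_nat (p ^ n) else 0)"
proof (cases "b = 0")
  case True thus ?thesis by (simp add: chi_0 card_F)
next
  case False
  have "(\<Sum>x\<in>UNIV. chi (b * x)) = (\<Sum>x\<in>UNIV. chi x)"
    by (rule sum.reindex_bij_witness[of _ "\<lambda>x. x / b" "\<lambda>x. b * x"]) (use False in auto)
  thus ?thesis using False sum_chi by simp
qed

definition fourier :: "'a set \<Rightarrow> 'a \<Rightarrow> complex" where
  "fourier S b = (\<Sum>x\<in>S. chi (b * x))"

lemma fourier_0: "fourier S 0 = of_nat (card S)"
  by (simp add: fourier_def chi_0)

lemma sum_chi_diff: "(\<Sum>b\<in>UNIV. chi (b * x) * chi (- (a * b))) = (if x = a then of_nat (p ^ n) else 0)"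
proof -
  have "chi (b * x) * chi (- (a * b)) = chi (b * (x - a))" for b
    by (simp add: chi_add[symmetric] algebra_simps)
  thus ?thesis using sum_chi_mult[of "x - a"] by (simp add: mult.commute)
qed

lemma fourier_inversion:
  "(\<Sum>b\<in>UNIV. fourier S b * chi (- (a * b))) = (if a \<in> S then of_nat (p ^ n) else 0)"
proof -
  have "(\<Sum>b\<in>UNIV. fourier S b * chi (- (a * b)))
      = (\<Sum>x\<in>S. \<Sum>b\<in>UNIV. chi (b * x) * chi (- (a * b)))"
    unfolding fourier_def sum_distrib_right by (rule sum.swap)
  also have "\<dots> = (\<Sum>x\<in>S. if x = a then of_nat (p ^ n) else 0)" by (simp add: sum_chi_diff)
  finally show ?thesis by (simp add: sum.delta')
qed

lemma sum_chi_neg: "(\<Sum>b\<in>UNIV. chi (- (a * b))) = (if a = 0 then of_nat (p ^ n) else 0)"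
proof -
  have "(\<Sum>b\<in>UNIV. chi (- (a * b))) = (if 0 = a then of_nat (p ^ n) else 0)"
    using sum_chi_diff[of 0 a] by (simp add: chi_0)
  thus ?thesis by auto
qed

lemma fourier_uminus:
  assumes sym: "\<And>x. x \<in> S \<Longrightarrow> - x \<in> S"
  shows "fourier S (- b) = fourier S b"
  unfolding fourier_def
  by (rule sum.reindex_bij_witness[of _ uminus uminus]) (auto intro: sym)

lemma fourier_square_inversion:
  assumes sym: "\<And>x. x \<in> S \<Longrightarrow> - x \<in> S"
  shows "(\<Sum>b\<in>UNIV. (fourier S b)\<^sup>2 * chi (- (a * b)))
           = of_nat (p ^ n) * of_nat (card {y\<in>S. y + a \<in> S})"
proof -
  have square: "(fourier S b)\<^sup>2 = (\<Sum>x\<in>S. \<Sum>y\<in>S. chi (b * x) * chi (- (b * y)))" for b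
  proof -
    have "(fourier S b)\<^sup>2 = fourier S b * fourier S (- b)"
      by (simp add: fourier_uminus[OF sym] power2_eq_square)
    thus ?thesis by (simp add: fourier_def sum_product)
  qed
  have "(\<Sum>b\<in>UNIV. (fourier S b)\<^sup>2 * chi (- (a * b)))
      = (\<Sum>b\<in>UNIV. \<Sum>x\<in>S. \<Sum>y\<in>S. chi (b * x) * chi (- ((y + a) * b)))"
    unfolding square sum_distrib_right
    by (intro sum.cong refl) (simp add: mult.assoc chi_add[symmetric] algebra_simps)
  also have "\<dots> = (\<Sum>x\<in>S. \<Sum>b\<in>UNIV. \<Sum>y\<in>S. chi (b * x) * chi (- ((y + a) * b)))"
    by (rule sum.swap)
  also have "\<dots> = (\<Sum>x\<in>S. \<Sum>y\<in>S. \<Sum>b\<in>UNIV. chi (b * x) * chi (- ((y + a) * b)))"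
    by (rule sum.cong[OF refl], rule sum.swap)
  also have "\<dots> = (\<Sum>x\<in>S. \<Sum>y\<in>S. if x = y + a then of_nat (p ^ n) else 0)"
    by (simp only: sum_chi_diff)
  also have "\<dots> = (\<Sum>y\<in>S. \<Sum>x\<in>S. if x = y + a then of_nat (p ^ n) else 0)"
    by (rule sum.swap)
  also have "\<dots> = of_nat (p ^ n) * of_nat (card {y\<in>S. y + a \<in> S})"
    by (simp add: sum.delta' sum.If_cases Int_def)
  finally show ?thesis .
qed

text \<open>If the Fourier transform of a symmetric set \<open>S\<close> takes only two values \<open>r\<^sub>1, r\<^sub>2\<close> away
  from \<open>0\<close>, then \<open>\<^bold>S\<^sup>2 = (r\<^sub>1 + r\<^sub>2) \<^bold>S - r\<^sub>1 r\<^sub>2 + K \<delta>\<^sub>0\<close>, and Fourier inversion of this identity counts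
  \<open>|S \<inter> (S - a)|\<close> for every \<open>a\<close>.  This is the classical Fourier criterion for partial
  difference sets.\<close>

lemma two_valued_fourier_count:
  fixes S :: "'a set" and r1 r2 :: complex
  assumes sym: "\<And>x. x \<in> S \<Longrightarrow> - x \<in> S"
    and two_valued: "\<And>b. b \<noteq> 0 \<Longrightarrow> (fourier S b - r1) * (fourier S b - r2) = 0"
  shows "of_nat (p ^ n) * of_nat (card {y\<in>S. y + a \<in> S})
           = (r1 + r2) * (if a \<in> S then of_nat (p ^ n) else 0)
             - r1 * r2 * (if a = 0 then of_nat (p ^ n) else 0)
             + (of_nat (card S) - r1) * (of_nat (card S) - r2)"
proof -
  define K where "K = (of_nat (card S) - r1) * (of_nat (card S) - r2)"
  have quad: "(fourier S b)\<^sup>2 = (r1 + r2) * fourier S b - r1 * r2 + (if b = 0 then K else 0)" for b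
  proof (cases "b = 0")
    case True thus ?thesis by (simp add: K_def fourier_0 power2_eq_square algebra_simps)
  next
    case False
    thus ?thesis using two_valued[OF False] by (simp add: power2_eq_square algebra_simps)
  qed
  have "of_nat (p ^ n) * of_nat (card {y\<in>S. y + a \<in> S})
      = (\<Sum>b\<in>UNIV. (fourier S b)\<^sup>2 * chi (- (a * b)))"
    by (rule fourier_square_inversion[OF sym, symmetric])
  also have "\<dots> = (\<Sum>b\<in>UNIV. (r1 + r2) * (fourier S b * chi (- (a * b))) - r1 * r2 * chi (- (a * b))
                    + (if b = 0 then K * chi (- (a * b)) else 0))"
    by (intro sum.cong refl) (simp add: quad algebra_simps)
  also have "\<dots> = (r1 + r2) * (\<Sum>b\<in>UNIV. fourier S b * chi (- (a * b)))
                  - r1 * r2 * (\<Sum>b\<in>UNIV. chi (- (a * b))) + K"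
    by (simp add: sum.distrib sum_subtractf sum_distrib_left chi_0)
  finally show ?thesis by (simp add: fourier_inversion sum_chi_neg K_def)
qed


section \<open>Zero sets of functions satisfying Condition A\<close>

text \<open>Condition A for \<open>f\<close> on \<open>'a\<close> with \<open>|'a| = p\<^sup>n\<close>, \<open>n = 2k\<close>: \<open>f\<close> is \<open>Fp\<close>-valued, even,
  vanishes at \<open>0\<close>, is homogeneous of degree \<open>l\<close> over \<open>Fp\<close> with \<open>gcd(l - 1, p - 1) = 1\<close>, and is
  weakly regular bent: \<open>W\<^sub>f(b) = \<epsilon> p\<^sup>k \<zeta>\<^bsup>f\<^sup>*(b)\<^esup>\<close>.\<close>

context
  fixes k :: nat and f fstar :: "'a \<Rightarrow> 'a" and l :: int and eps :: int
  assumes n_eq: "n = 2 * k" and p_odd: "odd p"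
    and f_vals: "\<forall>x. f x \<in> Fp" and f0: "f 0 = 0" and f_even: "\<forall>x. f (- x) = f x"
    and l_gcd: "gcd (l - 1) (int p - 1) = 1"
    and f_hom: "\<forall>\<alpha>\<in>Fp. \<forall>x. f (\<alpha> * x) = power_int \<alpha> l * f x"
    and eps_pm: "eps \<in> {1, -1}"
    and fstar_vals: "\<forall>b. fstar b \<in> Fp"
    and bent: "\<forall>b. walsh p n zeta f b = of_int eps * of_nat (p ^ k) * zeta ^ fp_idx p (fstar b)"
begin

lemma k_pos: "k > 0"
  using n_pos n_eq by simp

lemma power_k_eq: "p ^ k = p * p ^ (k - 1)"
  using k_pos by (simp flip: power_Suc)

lemma power_n_eq: "p ^ n = p * p * (p ^ (k - 1))\<^sup>2"
proof -
  have "p ^ n = p ^ k * p ^ k" by (simp add: n_eq mult_2 power_add)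
  thus ?thesis by (simp add: power_k_eq power2_eq_square)
qed

definition fb :: "'a \<Rightarrow> 'a \<Rightarrow> 'a" where "fb b x = f x + tr (b * x)"
definition value_count :: "'a \<Rightarrow> nat \<Rightarrow> nat" where
  "value_count b i = card {x. fp_idx p (fb b x) = i}"
definition dual_idx :: "'a \<Rightarrow> nat" where "dual_idx b = fp_idx p (fstar b)"

lemma fb_in_Fp: "fb b x \<in> Fp"
  unfolding fb_def using f_vals by (intro Fp_add trace_in_Fp) blast

lemma dual_idx_less: "dual_idx b < p"
  unfolding dual_idx_def using fstar_vals fp_idx_less by blast

lemma sum_fb_values:
  "(\<Sum>x\<in>UNIV. h (fp_idx p (fb b x))) = (\<Sum>i<p. of_nat (value_count b i) * (h i :: 'c::comm_semiring_1))"
  unfolding value_count_def using sum_by_values[of UNIV "\<lambda>x. fp_idx p (fb b x)" p h]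
  by (simp add: fp_idx_less[OF fb_in_Fp])

text \<open>Bentness fixes the value distribution of \<open>f(x) + tr(bx)\<close>: since the only integer
  relations among \<open>1, \<zeta>, \<dots>, \<zeta>\<^sup>p\<^sup>-\<^sup>1\<close> have constant coefficients, every value is taken
  \<open>(p\<^sup>n - \<epsilon>p\<^sup>k)/p\<close> times, except \<open>f\<^sup>*(b)\<close>, which is taken \<open>\<epsilon>p\<^sup>k\<close> times more often.\<close>

lemma value_count_distribution:
  assumes i: "i < p"
  shows "int p * int (value_count b i)
           = int (p ^ n) - eps * int (p ^ k) + (if i = dual_idx b then int p * (eps * int (p ^ k)) else 0)"
proof -
  define E where "E = eps * int (p ^ k)"
  define c where "c j = int (value_count b j) - (if j = dual_idx b then E else 0)" for j
  have walsh: "(\<Sum>j<p. of_nat (value_count b j) * zeta ^ j) = of_int E * zeta ^ dual_idx b"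
    using bent sum_fb_values[of "\<lambda>i. zeta ^ i" b]
    by (simp add: walsh_def fb_def dual_idx_def E_def)
  have "(\<Sum>j<p. of_int (c j) * zeta ^ j)
      = (\<Sum>j<p. of_nat (value_count b j) * zeta ^ j) - (\<Sum>j<p. if j = dual_idx b then of_int E * zeta ^ j else 0)"
    by (simp add: c_def sum_subtractf left_diff_distrib if_distrib[of of_int] if_distrib[of "\<lambda>x. x * _"]
        cong: if_cong)
  also have "\<dots> = 0" using walsh dual_idx_less[of b] by (simp add: sum.delta)
  finally have const: "c j = c 0" if "j < p" for j
    using integer_relation_zeta_constant[OF p_prime zeta_p zeta_ne_1] that by blast
  have "(\<Sum>j<p. int (value_count b j)) = int (p ^ n)"
    using sum_fb_values[of "\<lambda>_. 1 :: int" b] by (simp add: card_F)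
  hence "(\<Sum>j<p. c j) = int (p ^ n) - E"
    using dual_idx_less[of b] by (simp add: c_def sum_subtractf sum.delta)
  moreover have "(\<Sum>j<p. c j) = (\<Sum>j<p. c 0)" by (rule sum.cong[OF refl]) (rule const, simp)
  ultimately have "int p * c 0 = int (p ^ n) - E" by simp
  moreover have "int (value_count b i) = c 0 + (if i = dual_idx b then E else 0)"
    using const[OF i] unfolding c_def[of i] by simp
  ultimately show ?thesis unfolding E_def[symmetric] by (simp add: distrib_left)
qed

text \<open>Hence the twisted sums \<open>\<Sum>\<^sub>x \<zeta>\<^bsup>u(f(x) + tr(bx))\<^esup>\<close>, \<open>u \<noteq> 0\<close>, only see the spike at \<open>f\<^sup>*(b)\<close>.\<close>

lemma twisted_exp_sum:
  assumes u: "0 < u" "u < p"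
  shows "(\<Sum>x\<in>UNIV. zeta ^ (u * fp_idx p (fb b x))) = of_int eps * of_nat (p ^ k) * zeta ^ (u * dual_idx b)"
proof -
  define E :: complex where "E = of_int eps * of_nat (p ^ k)"
  have count: "of_nat p * of_nat (value_count b i)
      = of_int (int (p ^ n) - eps * int (p ^ k)) + (if i = dual_idx b then of_nat p * E else 0)"
    if "i < p" for i
    using arg_cong[OF value_count_distribution[OF that, of b], of "of_int :: int \<Rightarrow> complex"]
    by (cases "i = dual_idx b") (simp_all add: E_def)
  have "(\<Sum>x\<in>UNIV. zeta ^ (u * fp_idx p (fb b x))) = (\<Sum>i<p. of_nat (value_count b i) * zeta ^ (u * i))"
    by (rule sum_fb_values)
  hence "of_nat p * (\<Sum>x\<in>UNIV. zeta ^ (u * fp_idx p (fb b x)))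
      = (\<Sum>i<p. of_nat p * of_nat (value_count b i) * zeta ^ (u * i))"
    by (simp add: sum_distrib_left mult.assoc)
  also have "\<dots> = (\<Sum>i<p. of_int (int (p ^ n) - eps * int (p ^ k)) * zeta ^ (i * u)
                    + (if i = dual_idx b then of_nat p * E * zeta ^ (u * i) else 0))"
    by (intro sum.cong refl) (simp add: count algebra_simps)
  also have "\<dots> = of_int (int (p ^ n) - eps * int (p ^ k)) * (\<Sum>i<p. zeta ^ (i * u))
                  + (\<Sum>i<p. if i = dual_idx b then of_nat p * E * zeta ^ (u * i) else 0)"
    by (simp only: sum.distrib sum_distrib_left)
  also have "(\<Sum>i<p. if i = dual_idx b then of_nat p * E * zeta ^ (u * i) else 0)
      = of_nat p * E * zeta ^ (u * dual_idx b)"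
    using dual_idx_less[of b] by simp
  also have "(\<Sum>i<p. zeta ^ (i * u)) = 0"
    using u sum_zeta_powers_mult[OF p_prime zeta_p zeta_ne_1, of u] by (auto dest: dvd_imp_le)
  finally show ?thesis using p_ge_2 by (simp add: E_def)
qed

definition zero_set :: "'a set" where "zero_set = {x. f x = 0}"

lemma zero_set_uminus: "x \<in> zero_set \<Longrightarrow> - x \<in> zero_set"
  using f_even by (simp add: zero_set_def)

text \<open>Writing the indicator of \<open>f(x) = 0\<close> as \<open>p\<^sup>-\<^sup>1 \<Sum>\<^sub>t \<psi>(t f(x))\<close> expresses the Fourier
  transform of \<open>Z\<close> through the sums \<open>\<Sum>\<^sub>x \<psi>(t f(x) + tr(bx))\<close>.\<close>

lemma fourier_zero_set_expand:
  "of_nat p * fourier zero_set b = (\<Sum>t<p. \<Sum>x\<in>UNIV. psi (of_nat t * f x + tr (b * x)))"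
proof -
  have "of_nat p * fourier zero_set b = (\<Sum>x\<in>UNIV. if f x = 0 then of_nat p * chi (b * x) else 0)"
    unfolding fourier_def zero_set_def sum_distrib_left
    using sum.inter_filter[of UNIV "\<lambda>x. of_nat p * chi (b * x)" "\<lambda>x. f x = 0"] by simp
  also have "\<dots> = (\<Sum>x\<in>UNIV. (if f x = 0 then of_nat p else 0) * chi (b * x))"
    by (intro sum.cong refl) simp
  also have "\<dots> = (\<Sum>x\<in>UNIV. \<Sum>t<p. psi (of_nat t * f x + tr (b * x)))"
    using f_vals
    by (intro sum.cong refl) (simp add: sum_psi_scaled[symmetric] sum_distrib_right psi_add
        Fp_mult trace_in_Fp chi_def)
  finally show ?thesis by (simp add: sum.swap[of _ UNIV])
qed

text \<open>Homogeneity turns each such sum with \<open>t \<noteq> 0\<close> into a twisted sum: for \<open>g = u \<in> Fp\<^sup>*\<close>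
  and \<open>t = g\<^sup>1\<^sup>-\<^sup>l\<close>, substituting \<open>x = gy\<close> gives \<open>t f(gy) + tr(bgy) = g (f(y) + tr(by))\<close>.\<close>

lemma homogeneous_twisted_sum:
  assumes u: "0 < u" "u < p"
  shows "(\<Sum>x\<in>UNIV. psi (of_nat (fp_idx p (power_int (of_nat u :: 'a) (1 - l))) * f x + tr (b * x)))
           = of_int eps * of_nat (p ^ k) * zeta ^ (u * dual_idx b)"
proof -
  define g :: 'a where "g = of_nat u"
  define t where "t = power_int g (1 - l)"
  have g0: "g \<noteq> 0" unfolding g_def using u by (rule of_nat_ne_0)
  have t_g: "t * power_int g l = g"
    unfolding t_def using g0 by (simp flip: power_int_add)
  have t: "of_nat (fp_idx p t) = t" unfolding t_def g_def by (simp add: of_nat_fp_idx Fp_power_int)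
  have "(\<Sum>x\<in>UNIV. psi (t * f x + tr (b * x))) = (\<Sum>y\<in>UNIV. psi (t * f (g * y) + tr (b * (g * y))))"
    by (rule sum.reindex_bij_witness[of _ "\<lambda>y. g * y" "\<lambda>x. x / g"]) (use g0 in auto)
  also have "\<dots> = (\<Sum>y\<in>UNIV. psi (of_nat u * fb b y))"
  proof (intro sum.cong refl)
    fix y
    have "t * f (g * y) = g * f y" using f_hom t_g by (simp add: g_def mult.assoc[symmetric])
    moreover have "tr (b * (g * y)) = g * tr (b * y)"
      using trace_scalar[of g "b * y"] by (simp add: g_def mult.left_commute)
    ultimately show "psi (t * f (g * y) + tr (b * (g * y))) = psi (of_nat u * fb b y)"
      by (simp add: fb_def g_def distrib_left)
  qed
  also have "\<dots> = (\<Sum>y\<in>UNIV. zeta ^ (u * fp_idx p (fb b y)))"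
    by (simp add: psi_scaled fb_in_Fp)
  finally have "(\<Sum>x\<in>UNIV. psi (t * f x + tr (b * x))) = (\<Sum>y\<in>UNIV. zeta ^ (u * fp_idx p (fb b y)))" .
  thus ?thesis using twisted_exp_sum[OF u] t by (simp add: t_def g_def)
qed

text \<open>The Fourier transform of the zero set: the term \<open>t = 0\<close> contributes \<open>p\<^sup>n \<delta>\<^sub>b\<^sub>,\<^sub>0\<close>; the
  remaining terms, reindexed by \<open>u \<mapsto> u\<^sup>1\<^sup>-\<^sup>l\<close>, sum to \<open>\<epsilon>p\<^sup>k (\<Sum>\<^sub>u\<^sub>\<noteq>\<^sub>0 \<zeta>\<^bsup>u f\<^sup>*(b)\<^esup>)\<close>.\<close>

lemma fourier_zero_set:
  "of_nat p * fourier zero_set b = (if b = 0 then of_nat (p ^ n) else 0)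
     + of_int eps * of_nat (p ^ k) * ((if dual_idx b = 0 then of_nat p else 0) - 1)"
proof -
  define F where "F t = (\<Sum>x\<in>UNIV. psi (of_nat t * f x + tr (b * x)))" for t
  have lessThan_p: "{..<p} = insert 0 {1..<p}" using p_ge_2 by auto
  have "of_nat p * fourier zero_set b = F 0 + (\<Sum>t\<in>{1..<p}. F t)"
    unfolding fourier_zero_set_expand F_def lessThan_p by simp
  also have "F 0 = (if b = 0 then of_nat (p ^ n) else 0)"
    unfolding F_def using sum_chi_mult[of b] by (simp add: chi_def)
  also have "(\<Sum>t\<in>{1..<p}. F t) = (\<Sum>u\<in>{1..<p}. F (fp_idx p (power_int (of_nat u :: 'a) (1 - l))))"
    using sum.reindex_bij_betw[OF power_int_reparam_bij[OF l_gcd], of F] by simp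
  also have "\<dots> = (\<Sum>u\<in>{1..<p}. of_int eps * of_nat (p ^ k) * zeta ^ (u * dual_idx b))"
    unfolding F_def by (intro sum.cong refl homogeneous_twisted_sum) auto
  also have "\<dots> = of_int eps * of_nat (p ^ k) * ((\<Sum>u<p. zeta ^ (u * dual_idx b)) - 1)"
    unfolding lessThan_p by (simp add: sum_distrib_left)
  also have "(\<Sum>u<p. zeta ^ (u * dual_idx b)) = (if dual_idx b = 0 then of_nat p else 0)"
    using sum_zeta_powers_mult[OF p_prime zeta_p zeta_ne_1, of "dual_idx b"] dual_idx_less[of b]
    by (auto dest: dvd_imp_le)
  finally show ?thesis .
qed

lemma fourier_zero_set_nonzero:
  assumes "b \<noteq> 0"
  shows "fourier zero_set b = of_int eps * of_nat (p ^ (k - 1)) * ((if dual_idx b = 0 then of_nat p else 0) - 1)"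
proof -
  have "of_nat p * fourier zero_set b
      = of_nat p * (of_int eps * of_nat (p ^ (k - 1)) * ((if dual_idx b = 0 then of_nat p else 0) - 1))"
    using fourier_zero_set[of b] assms by (simp add: power_k_eq algebra_simps)
  moreover have "(of_nat p :: complex) \<noteq> 0" using p_ge_2 by simp
  ultimately show ?thesis by (rule mult_left_cancel[THEN iffD1, rotated])
qed

lemma card_zero_set_complex:
  "of_nat (card zero_set) = of_nat p * (of_nat (p ^ (k - 1)))\<^sup>2
     + of_int eps * of_nat (p ^ (k - 1)) * ((if dual_idx 0 = 0 then of_nat p else 0) - (1 :: complex))"
proof -
  have "of_nat p * of_nat (card zero_set) = of_nat p * (of_nat p * (of_nat (p ^ (k - 1)))\<^sup>2
     + of_int eps * of_nat (p ^ (k - 1)) * ((if dual_idx 0 = 0 then of_nat p else 0) - (1 :: complex)))"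
    using fourier_zero_set[of 0] by (simp add: fourier_0 power_k_eq power_n_eq algebra_simps)
  moreover have "(of_nat p :: complex) \<noteq> 0" using p_ge_2 by simp
  ultimately show ?thesis by (rule mult_left_cancel[THEN iffD1, rotated])
qed

lemma zero_set_shift_count:
  fixes r1 r2 :: complex
  assumes r1: "r1 = of_int eps * of_nat (p ^ (k - 1)) * (of_nat p - 1)"
    and r2: "r2 = - (of_int eps * of_nat (p ^ (k - 1)))"
  shows "of_nat (p ^ n) * of_nat (card {y\<in>zero_set. y + a \<in> zero_set})
     = (r1 + r2) * (if a \<in> zero_set then of_nat (p ^ n) else 0)
       - r1 * r2 * (if a = 0 then of_nat (p ^ n) else 0)
       + (of_nat (card zero_set) - r1) * (of_nat (card zero_set) - r2)"
proof (rule two_valued_fourier_count[OF zero_set_uminus])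
  fix b :: 'a assume "b \<noteq> 0"
  thus "(fourier zero_set b - r1) * (fourier zero_set b - r2) = 0"
    unfolding r1 r2 by (cases "dual_idx b = 0") (simp_all add: fourier_zero_set_nonzero)
qed

text \<open>Counting \<open>|Z|\<close> twice (directly and through the criterion at \<open>a = 0\<close>) forces
  \<open>f\<^sup>*(0) = 0\<close>: otherwise the two counts differ by a nonzero multiple of \<open>p - 2\<close>
  (\<open>p\<close> is odd).\<close>

lemma dual_idx_0: "dual_idx 0 = 0"
proof (rule ccontr)
  assume "dual_idx 0 \<noteq> 0"
  define pc where "pc = (of_nat p :: complex)"
  define P where "P = (of_nat (p ^ (k - 1)) :: complex)"
  define e where "e = (of_int eps :: complex)"
  define z where "z = (of_nat (card zero_set) :: complex)"
  have e2: "e * e = 1" using eps_pm by (auto simp: e_def)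
  have z: "z = pc * P\<^sup>2 - e * P"
    using card_zero_set_complex \<open>dual_idx 0 \<noteq> 0\<close> by (simp add: z_def pc_def P_def e_def)
  have q: "(of_nat (p ^ n) :: complex) = pc * pc * P\<^sup>2"
    by (simp add: power_n_eq pc_def P_def)
  have count: "pc * pc * P\<^sup>2 * (pc * P\<^sup>2 - e * P)
      = (e * P * (pc - 1) - e * P) * (pc * pc * P\<^sup>2)
        - e * P * (pc - 1) * (- (e * P)) * (pc * pc * P\<^sup>2)
        + (pc * P\<^sup>2 - e * P - e * P * (pc - 1)) * (pc * P\<^sup>2 - e * P + e * P)"
    (is "?lhs = ?rhs")
    using zero_set_shift_count[OF refl refl, of 0] f0 z q
    by (simp add: z_def pc_def P_def e_def zero_set_def)
  have "pc * pc * P * P * P * e * (pc - 2) = (?rhs - ?lhs) - (e * e - 1) * (pc * pc * P * P * P * P * (pc - 1))"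
    by (simp add: algebra_simps power2_eq_square)
  hence "pc * pc * P * P * P * e * (pc - 2) = 0" using count e2 by simp
  moreover have "pc - 2 \<noteq> 0"
  proof -
    have "p \<noteq> 2" using p_odd by auto
    hence "(of_nat p :: complex) \<noteq> of_nat 2" by (simp only: of_nat_eq_iff not_False_eq_True)
    thus ?thesis by (simp add: pc_def)
  qed
  ultimately show False using p_ge_2 eps_pm by (auto simp: pc_def P_def e_def)
qed

lemma card_zero_set:
  "int (card zero_set) = int p * (int p ^ (k - 1))\<^sup>2 + eps * int p ^ (k - 1) * (int p - 1)"
proof -
  have "(of_int (int (card zero_set)) :: complex)
      = of_int (int p * (int p ^ (k - 1))\<^sup>2 + eps * int p ^ (k - 1) * (int p - 1))"
    using card_zero_set_complex by (simp add: dual_idx_0)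
  thus ?thesis by (simp only: of_int_eq_iff)
qed

lemma zero_set_shift_count_int:
  assumes "a \<noteq> 0"
  shows "int (card {y\<in>zero_set. y + a \<in> zero_set})
           = (if a \<in> zero_set then eps * int p ^ (k - 1) * (int p - 2) else 0)
             + (int p ^ (k - 1))\<^sup>2 + eps * int p ^ (k - 1)"
proof -
  define pc where "pc = (of_nat p :: complex)"
  define P where "P = (of_nat (p ^ (k - 1)) :: complex)"
  define e where "e = (of_int eps :: complex)"
  define c where "c = (of_nat (card {y\<in>zero_set. y + a \<in> zero_set}) :: complex)"
  define m where "m = (if a \<in> zero_set then 1 else 0 :: complex)"
  have z: "of_nat (card zero_set) = pc * P\<^sup>2 + e * P * (pc - 1)"
    using card_zero_set_complex by (simp add: dual_idx_0 pc_def P_def e_def)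
  have q: "(of_nat (p ^ n) :: complex) = pc * pc * P\<^sup>2"
    by (simp add: power_n_eq pc_def P_def)
  have "pc * pc * P\<^sup>2 * c = (e * P * (pc - 1) - e * P) * (m * (pc * pc * P\<^sup>2))
        + (pc * P\<^sup>2 + e * P * (pc - 1) - e * P * (pc - 1)) * (pc * P\<^sup>2 + e * P * (pc - 1) + e * P)"
    using zero_set_shift_count[OF refl refl, of a] assms unfolding q z
    by (simp add: c_def m_def pc_def P_def e_def)
  also have "\<dots> = pc * pc * P\<^sup>2 * (m * e * P * (pc - 2) + P\<^sup>2 + e * P)"
    by (simp add: algebra_simps power2_eq_square)
  finally have "pc * pc * P\<^sup>2 * c = pc * pc * P\<^sup>2 * (m * e * P * (pc - 2) + P\<^sup>2 + e * P)" .
  moreover have "pc * pc * P\<^sup>2 \<noteq> 0" using p_ge_2 by (simp add: pc_def P_def)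
  ultimately have "c = m * e * P * (pc - 2) + P\<^sup>2 + e * P" by simp
  hence "(of_int (int (card {y\<in>zero_set. y + a \<in> zero_set})) :: complex)
      = of_int ((if a \<in> zero_set then eps * int p ^ (k - 1) * (int p - 2) else 0)
                + (int p ^ (k - 1))\<^sup>2 + eps * int p ^ (k - 1))"
    by (simp add: c_def m_def pc_def P_def e_def)
  thus ?thesis by (simp only: of_int_eq_iff)
qed

lemma nonzero_zero_set_pds:
  "is_pds {x. x \<noteq> 0 \<and> f x = 0} (int p ^ (2 * k))
     ((int p ^ k - eps) * (int p ^ (k - 1) + eps))
     ((int p ^ (k - 1) + eps)\<^sup>2 - 3 * eps * (int p ^ (k - 1) + eps) + eps * int p ^ k)
     ((int p ^ (k - 1) + eps) * int p ^ (k - 1))"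
proof -
  define D where "D = {x. x \<noteq> 0 \<and> f x = 0}"
  define P where "P = int p ^ (k - 1)"
  have D: "D = zero_set - {0}" by (auto simp: D_def zero_set_def)
  have Z0: "0 \<in> zero_set" using f0 by (simp add: zero_set_def)
  have pk: "int p ^ k = int p * P" using arg_cong[OF power_k_eq, of int] by (simp add: P_def)
  have "card zero_set > 0" using Z0 by (auto simp: card_gt_0_iff)
  hence "int (card D) = int (card zero_set) - 1" using Z0 by (simp add: D card_Diff_singleton)
  hence card_D: "int (card D) = (int p ^ k - eps) * (P + eps)"
    unfolding card_zero_set pk P_def[symmetric] using eps_pm by (auto simp: algebra_simps power2_eq_square)
  have diff_count: "int (diff_count D a) = int (card {y\<in>zero_set. y + a \<in> zero_set})
                      - (if a \<in> zero_set then 2 else 0)" if "a \<noteq> 0" for a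
    using shift_count_remove_zero[OF _ Z0 zero_set_uminus that] by (simp add: D diff_count_eq)
  have lam: "int (diff_count D a) = (P + eps)\<^sup>2 - 3 * eps * (P + eps) + eps * int p ^ k"
    if "a \<in> D" for a
  proof -
    have "a \<noteq> 0" "a \<in> zero_set" using that by (auto simp: D)
    thus ?thesis
      unfolding diff_count[OF \<open>a \<noteq> 0\<close>] zero_set_shift_count_int[OF \<open>a \<noteq> 0\<close>] pk P_def[symmetric]
      using eps_pm by (auto simp: algebra_simps power2_eq_square)
  qed
  have mu: "int (diff_count D a) = (P + eps) * P" if "a \<noteq> 0" "a \<notin> D" for a
  proof -
    have "a \<notin> zero_set" using that by (auto simp: D)
    thus ?thesis
      unfolding diff_count[OF \<open>a \<noteq> 0\<close>] zero_set_shift_count_int[OF \<open>a \<noteq> 0\<close>] P_def[symmetric]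
      by (simp add: power2_eq_square algebra_simps)
  qed
  show ?thesis
    unfolding is_pds_def D_def[symmetric] P_def[symmetric]
    using card_D lam mu card_F n_eq by (auto simp: D)
qed

theorem condition_A_pds_srg:
  defines "D \<equiv> {x. x \<noteq> 0 \<and> f x = 0}"
  shows "is_pds D (int p ^ (2 * k))
            ((int p ^ k - eps) * (int p ^ (k - 1) + eps))
            ((int p ^ (k - 1) + eps)\<^sup>2 - 3 * eps * (int p ^ (k - 1) + eps) + eps * int p ^ k)
            ((int p ^ (k - 1) + eps) * int p ^ (k - 1))
       \<and> is_srg (\<lambda>x y. x - y \<in> D) (int p ^ (2 * k))
            ((int p ^ k - eps) * (int p ^ (k - 1) + eps))
            ((int p ^ (k - 1) + eps)\<^sup>2 - 3 * eps * (int p ^ (k - 1) + eps) + eps * int p ^ k)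
            ((int p ^ (k - 1) + eps) * int p ^ (k - 1))"
  using nonzero_zero_set_pds pds_cayley_srg[OF nonzero_zero_set_pds] f_even
  unfolding D_def by simp

end

end

end

theorem theorem1:
  fixes p k :: nat and f fstar :: "'a::{field,finite} \<Rightarrow> 'a" and l :: int
    and zeta :: complex and eps :: int
  assumes p_prime: "prime p" and p_odd: "odd p"
    and card_F: "card (UNIV::'a set) = p ^ (2 * k)"
    and char_p: "of_nat p = (0::'a)"
    and zeta_prim: "zeta ^ p = 1" "zeta \<noteq> 1"
    and f_vals: "\<forall>x. f x \<in> prime_subfield p"
    and f0: "f 0 = 0"
    and f_even: "\<forall>x. f (- x) = f x"
    and l_gcd: "gcd (l - 1) (int p - 1) = 1"
    and f_hom: "\<forall>\<alpha>\<in>prime_subfield p. \<forall>x. f (\<alpha> * x) = power_int \<alpha> l * f x"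
    and eps_pm: "eps \<in> {1, -1}"
    and fstar_vals: "\<forall>b. fstar b \<in> prime_subfield p"
    and bent: "\<forall>b. walsh p (2 * k) zeta f b
                  = of_int eps * of_nat (p ^ k) * zeta ^ fp_idx p (fstar b)"
  defines "D \<equiv> {x. x \<noteq> 0 \<and> f x = 0}"
  shows "is_pds D (int p ^ (2 * k))
            ((int p ^ k - eps) * (int p ^ (k - 1) + eps))
            ((int p ^ (k - 1) + eps)\<^sup>2 - 3 * eps * (int p ^ (k - 1) + eps) + eps * int p ^ k)
            ((int p ^ (k - 1) + eps) * int p ^ (k - 1))
       \<and> is_srg (\<lambda>x y. x - y \<in> D) (int p ^ (2 * k))
            ((int p ^ k - eps) * (int p ^ (k - 1) + eps))
            ((int p ^ (k - 1) + eps)\<^sup>2 - 3 * eps * (int p ^ (k - 1) + eps) + eps * int p ^ k)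
            ((int p ^ (k - 1) + eps) * int p ^ (k - 1))"
  unfolding D_def
  by (rule condition_A_pds_srg[OF p_prime char_p card_F zeta_prim refl p_odd f_vals f0 f_even
        l_gcd f_hom eps_pm fstar_vals bent])

end
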